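(* Let $n\geq 2$, $1\leq k\leq n-1$, $w=w_1\cdots w_n\in\mathfrak{S}_n$, and let the section $w_i\cdots w_j$ be $k$-ascending. (1) If there is $t>j$ with $w_j<w_t$ and there is no $k$-down in $w_j\cdots w_t$, then there is $t'$ with $j<t'\leq t$ such that $w_i\cdots w_j\cdots w_{t'}$ is $k$-ascending. (2) If there is $s<i$ with $w_s<w_i$ and there is no $k$-down in $w_s\cdots w_i$, then there is $s'$ with $s\leq s'<i$ such that $w_{s'}\cdots w_i\cdots w_j$ is $k$-ascending.
   Context: $\mathfrak{S}_n$ is the set of permutations $w=w_1\cdots w_n$ of $\{1,\dots,n\}$. A section of $w$ is a consecutive block $w_sw_{s+1}\cdots w_t$ ($s\le t$). A section $w_s\cdots w_t$ is a $k$-up if $s<t$ and $w_t-w_s\geq k$, and a $k$-down if $s<t$ and $w_s-w_t\geq k$. A $k$-up (or $k$-down) "in" the section $w_a\cdots w_b$ means a $k$-up (or $k$-down) $w_s\cdots w_t$ with $a\leq s<t\leq b$. A section $w_i\cdots w_j$ with $i<j$ is $k$-ascending if: $w_i=\min\{w_i,\dots,w_j\}$ and $w_j=\max\{w_i,\dots,w_j\}$; $w_j-w_i\geq k$; and there is no $k$-down in $w_i\cdots w_j$. *)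

theory Defs
  imports Main
begin

(* A permutation w_1...w_n of {1..n} is modelled as w :: nat => nat restricted to {1..n},
   positions and values both 1-indexed. *)

definition is_perm :: "nat \<Rightarrow> (nat \<Rightarrow> nat) \<Rightarrow> bool" where
  "is_perm n w \<longleftrightarrow> bij_betw w {1..n} {1..n}"

definition k_up :: "nat \<Rightarrow> (nat \<Rightarrow> nat) \<Rightarrow> nat \<Rightarrow> nat \<Rightarrow> bool" where
  "k_up k w s t \<longleftrightarrow> s < t \<and> int (w t) - int (w s) \<ge> int k"

definition k_down :: "nat \<Rightarrow> (nat \<Rightarrow> nat) \<Rightarrow> nat \<Rightarrow> nat \<Rightarrow> bool" where
  "k_down k w s t \<longleftrightarrow> s < t \<and> int (w s) - int (w t) \<ge> int k"

definition has_k_down_in :: "nat \<Rightarrow> (nat \<Rightarrow> nat) \<Rightarrow> nat \<Rightarrow> nat \<Rightarrow> bool" where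
  "has_k_down_in k w a b \<longleftrightarrow> (\<exists>s t. a \<le> s \<and> s < t \<and> t \<le> b \<and> k_down k w s t)"

definition k_ascending :: "nat \<Rightarrow> (nat \<Rightarrow> nat) \<Rightarrow> nat \<Rightarrow> nat \<Rightarrow> bool" where
  "k_ascending k w i j \<longleftrightarrow> i < j
     \<and> w i = Min (w ` {i..j}) \<and> w j = Max (w ` {i..j})
     \<and> int (w j) - int (w i) \<ge> int k
     \<and> \<not> has_k_down_in k w i j"

end

theory Submission
  imports Defs
begin

text \<open>To extend w_i..w_j to the right, let t' be the first position after j with w_t' > w_j.
  Values strictly between j and t' are at most w_j and, as w_j..w_t has no k-down, greater than
  w_j - k \<ge> w_i; a k-down of w_i..w_t' straddling j would therefore yield one starting at j.
  Extension to the left is extension to the right of the word reflected in positions and values.\<close>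

lemma no_k_down_in_iff:
  "\<not> has_k_down_in k w a b \<longleftrightarrow> (\<forall>s t. a \<le> s \<and> s < t \<and> t \<le> b \<longrightarrow> int (w s) - int (w t) < int k)"
  unfolding has_k_down_in_def k_down_def by (meson not_le)

lemma k_ascending_iff:
  "k_ascending k w i j \<longleftrightarrow> i < j \<and> (\<forall>p. i \<le> p \<and> p \<le> j \<longrightarrow> w i \<le> w p \<and> w p \<le> w j)
     \<and> int k \<le> int (w j) - int (w i) \<and> \<not> has_k_down_in k w i j"
proof (cases "i < j")
  case True
  then have "w i = Min (w ` {i..j}) \<longleftrightarrow> (\<forall>p. i \<le> p \<and> p \<le> j \<longrightarrow> w i \<le> w p)"
    and "w j = Max (w ` {i..j}) \<longleftrightarrow> (\<forall>p. i \<le> p \<and> p \<le> j \<longrightarrow> w p \<le> w j)"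
    by (auto intro!: Min_eqI[symmetric] Max_eqI[symmetric])
  then show ?thesis unfolding k_ascending_def by blast
qed (simp add: k_ascending_def)

lemma k_ascending_extend_right:
  assumes asc: "k_ascending k w i j"
    and "j < t" "w j < w t" and no_down: "\<not> has_k_down_in k w j t"
  obtains t' where "j < t'" "t' \<le> t" "k_ascending k w i t'"
proof -
  have "i < j" and bounds: "\<And>p. i \<le> p \<Longrightarrow> p \<le> j \<Longrightarrow> w i \<le> w p \<and> w p \<le> w j"
    and rise: "int k \<le> int (w j) - int (w i)" and no_down_ij: "\<not> has_k_down_in k w i j"
    using asc unfolding k_ascending_iff by blast+
  have drop_jt: "\<And>s u. j \<le> s \<Longrightarrow> s < u \<Longrightarrow> u \<le> t \<Longrightarrow> int (w s) - int (w u) < int k"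
    using no_down unfolding no_k_down_in_iff by blast
  define t' where "t' = (LEAST p. j < p \<and> p \<le> t \<and> w j < w p)"
  have t': "j < t'" "t' \<le> t" "w j < w t'"
    using LeastI[of "\<lambda>p. j < p \<and> p \<le> t \<and> w j < w p" t] \<open>j < t\<close> \<open>w j < w t\<close>
    unfolding t'_def by auto
  have below: "w p \<le> w j" if "j < p" "p < t'" for p
    using not_less_Least[of p "\<lambda>p. j < p \<and> p \<le> t \<and> w j < w p"] that t'
    unfolding t'_def by auto
  have window: "int (w j) - int (w p) < int k" if "j < p" "p \<le> t'" for p
    using drop_jt[of j p] that t' by auto
  have "w i \<le> w p \<and> w p \<le> w t'" if "i \<le> p" "p \<le> t'" for p
  proof (cases "p \<le> j")
    case True
    then show ?thesis using bounds[of p] that t' by auto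
  next
    case False
    then show ?thesis using window[of p] below[of p] rise that t' by (cases "p = t'") auto
  qed
  moreover have "int (w s) - int (w u) < int k" if "i \<le> s" "s < u" "u \<le> t'" for s u
  proof -
    consider "u \<le> j" | "j \<le> s" | "s < j" "j < u" by linarith
    then show ?thesis
    proof cases
      case 1
      then show ?thesis using no_down_ij that unfolding no_k_down_in_iff by blast
    next
      case 2
      then show ?thesis using drop_jt that t' by auto
    next
      case 3
      then show ?thesis using bounds[of s] window[of u] that by auto
    qed
  qed
  ultimately have "k_ascending k w i t'"
    using \<open>i < j\<close> t' rise unfolding k_ascending_iff no_k_down_in_iff by auto
  with t' show thesis using that by blast
qed

text \<open>Reversal about M and complement with respect to C; C must dominate all values at
  positions \<le> M, otherwise the truncated subtraction destroys the order.\<close>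

definition reflect :: "nat \<Rightarrow> nat \<Rightarrow> (nat \<Rightarrow> nat) \<Rightarrow> nat \<Rightarrow> nat" where
  "reflect M C w p = C - w (M - p)"

lemma k_down_reflect:
  assumes "t \<le> M" "\<And>p. p \<le> M \<Longrightarrow> w p \<le> C"
  shows "k_down k (reflect M C w) s t \<longleftrightarrow> k_down k w (M - t) (M - s)"
  using assms(1) assms(2)[of "M - s"] assms(2)[of "M - t"]
  unfolding k_down_def reflect_def by auto

lemma has_k_down_in_reflect:
  assumes "a \<le> b" "b \<le> M" "\<And>p. p \<le> M \<Longrightarrow> w p \<le> C"
  shows "has_k_down_in k (reflect M C w) (M - b) (M - a) \<longleftrightarrow> has_k_down_in k w a b"
proof
  assume "has_k_down_in k (reflect M C w) (M - b) (M - a)"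
  then obtain s t where st: "M - b \<le> s" "s < t" "t \<le> M - a" "k_down k (reflect M C w) s t"
    unfolding has_k_down_in_def by blast
  then have "k_down k w (M - t) (M - s)" using k_down_reflect[of t M w C] assms by simp
  moreover have "a \<le> M - t" "M - s \<le> b" using st assms by auto
  ultimately show "has_k_down_in k w a b"
    unfolding has_k_down_in_def k_down_def by blast
next
  assume "has_k_down_in k w a b"
  then obtain s t where st: "a \<le> s" "s < t" "t \<le> b" "k_down k w s t"
    unfolding has_k_down_in_def by blast
  then have "k_down k (reflect M C w) (M - t) (M - s)"
    using k_down_reflect[of "M - s" M w C] assms by (simp add: k_down_def)
  moreover have "M - b \<le> M - t" "M - s \<le> M - a" using st by auto
  ultimately show "has_k_down_in k (reflect M C w) (M - b) (M - a)"
    unfolding has_k_down_in_def k_down_def by blast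
qed

lemma all_reflected_range_iff:
  fixes a b M :: nat
  assumes "a \<le> b" "b \<le> M"
  shows "(\<forall>p. M - b \<le> p \<and> p \<le> M - a \<longrightarrow> P p) \<longleftrightarrow> (\<forall>q. a \<le> q \<and> q \<le> b \<longrightarrow> P (M - q))"
proof safe
  fix q assume "\<forall>p. M - b \<le> p \<and> p \<le> M - a \<longrightarrow> P p" "a \<le> q" "q \<le> b"
  then show "P (M - q)" using diff_le_mono2[of q b M] diff_le_mono2[of a q M] by blast
next
  fix p assume all: "\<forall>q. a \<le> q \<and> q \<le> b \<longrightarrow> P (M - q)" and "M - b \<le> p" "p \<le> M - a"
  then have "a \<le> M - p" "M - p \<le> b" "M - (M - p) = p" using assms by auto
  then show "P p" using all by metis
qed

lemma k_ascending_reflect: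
  assumes "a \<le> b" "b \<le> M" and le_C: "\<And>p. p \<le> M \<Longrightarrow> w p \<le> C"
  shows "k_ascending k (reflect M C w) (M - b) (M - a) \<longleftrightarrow> k_ascending k w a b"
proof -
  let ?v = "reflect M C w"
  have v: "int (?v (M - q)) = int C - int (w q)" if "q \<le> M" for q
    using that le_C[of q] by (simp add: reflect_def)
  have "M - b < M - a \<longleftrightarrow> a < b" using assms by auto
  moreover have "(\<forall>p. M - b \<le> p \<and> p \<le> M - a \<longrightarrow> ?v (M - b) \<le> ?v p \<and> ?v p \<le> ?v (M - a))
      \<longleftrightarrow> (\<forall>q. a \<le> q \<and> q \<le> b \<longrightarrow> w a \<le> w q \<and> w q \<le> w b)"
    unfolding all_reflected_range_iff[OF assms(1,2)]
    using assms v by (smt (verit, best) le_trans of_nat_le_iff)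
  moreover have "int (?v (M - a)) - int (?v (M - b)) = int (w b) - int (w a)"
    using assms v[of a] v[of b] by simp
  ultimately show ?thesis
    unfolding k_ascending_iff using has_k_down_in_reflect[OF assms, where k=k] by simp
qed

lemma k_ascending_extend_left:
  assumes asc: "k_ascending k w i j"
    and "s < i" "w s < w i" and no_down: "\<not> has_k_down_in k w s i"
  obtains s' where "s \<le> s'" "s' < i" "k_ascending k w s' j"
proof -
  define C where "C = Max (w ` {..j})"
  have le_C: "w p \<le> C" if "p \<le> j" for p
    using that unfolding C_def by auto
  have "i < j" using asc unfolding k_ascending_def by blast
  let ?v = "reflect j C w"
  have "k_ascending k ?v (j - j) (j - i)"
    using asc k_ascending_reflect[of i j j w C] \<open>i < j\<close> le_C by simp
  moreover have "j - i < j - s" "?v (j - i) < ?v (j - s)"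
    using \<open>s < i\<close> \<open>i < j\<close> \<open>w s < w i\<close> le_C[of s] le_C[of i] by (auto simp: reflect_def)
  moreover have "\<not> has_k_down_in k ?v (j - i) (j - s)"
    using no_down has_k_down_in_reflect[of s i j w C] \<open>s < i\<close> \<open>i < j\<close> le_C by simp
  ultimately obtain t' where "j - i < t'" "t' \<le> j - s" "k_ascending k ?v (j - j) t'"
    by (rule k_ascending_extend_right)
  moreover have "t' = j - (j - t')" using \<open>t' \<le> j - s\<close> by simp
  ultimately have "k_ascending k ?v (j - j) (j - (j - t'))" "s \<le> j - t'" "j - t' < i"
    by auto
  then show thesis
    using that k_ascending_reflect[of "j - t'" j j w C] le_C \<open>i < j\<close> by auto
qed

theorem lemma2p4:
  fixes n k i j :: nat and w :: "nat \<Rightarrow> nat"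
  assumes "n \<ge> 2" and "1 \<le> k" and "k \<le> n - 1"
    and "is_perm n w"
    and "1 \<le> i" and "j \<le> n"
    and "k_ascending k w i j"
  shows "(\<forall>t. j < t \<and> t \<le> n \<and> w j < w t \<and> \<not> has_k_down_in k w j t
            \<longrightarrow> (\<exists>t'. j < t' \<and> t' \<le> t \<and> k_ascending k w i t'))
       \<and> (\<forall>s. 1 \<le> s \<and> s < i \<and> w s < w i \<and> \<not> has_k_down_in k w s i
            \<longrightarrow> (\<exists>s'. s \<le> s' \<and> s' < i \<and> k_ascending k w s' j))"
  using k_ascending_extend_right[OF \<open>k_ascending k w i j\<close>]
    k_ascending_extend_left[OF \<open>k_ascending k w i j\<close>]
  by blast

end
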